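(* For every $i$ with $0\le i\le\rho(m)-1$ and every integer $t$ with $1\le t\le p_i-1$, we have $x^{\alpha_i}(k+t)=0$.
   Context: For $u\in\mathbb{R}$ let $\mathbf 1[u]=1$ if $u\ge 0$ and $\mathbf 1[u]=0$ if $u<0$. Let $m$ be a positive integer and let $\rho(m)$ denote the number of primes $p$ with $2m<p<3m$; assume $\rho(m)\ge 2$. List these primes as $p_0>p_1>\dots>p_{\rho(m)-1}$ and put $\alpha_i=3m-p_i$. Let $k=(6m-1)\rho(m)$, $\mu_i=\lfloor k/p_i\rfloor$, $\beta_i=k-p_i\mu_i$. Define weights $\bar a_j$, $1\le j\le k$: if $\rho(m)$ is even, $\bar a_j=2$ if $j=\ell p_i$ for some $i$ and some $\ell$ with $1\le \ell\le 3\rho(m)/2$, $\bar a_j=-2$ if $j=\ell p_i$ with $3\rho(m)/2<\ell\le 2\rho(m)$, and $\bar a_j=0$ otherwise; if $\rho(m)$ is odd, $\bar a_j=2$ if $j=\ell p_i$ with $1\le\ell\le (3\rho(m)-1)/2$, $\bar a_j=-2$ if $j=\ell p_i$ with $(3\rho(m)+1)/2\le \ell\le 2\rho(m)-2$, $\bar a_j=-1$ if $j=\ell p_i$ with $\ell\in\{2\rho(m)-1,2\rho(m)\}$, and $\bar a_j=0$ otherwise (well defined since the sets $\{\ell p_i:1\le\ell\le2\rho(m)\}$ are pairwise disjoint). Let $\bar\theta=2\rho(m)$. For each $i$ define $x^{\alpha_i}(t)$ for $0\le t\le k-1$ by $x^{\alpha_i}(t)=1$ if $t=\beta_i+\ell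 p_i$ for some $0\le \ell\le\mu_i-1$ and $x^{\alpha_i}(t)=0$ otherwise, and for $t\ge k$ by $x^{\alpha_i}(t)=\mathbf 1\big[\sum_{j=1}^k \bar a_j x^{\alpha_i}(t-j)-\bar\theta\big]$. *)

theory Defs
  imports "HOL-Computational_Algebra.Primes"
begin

definition primes_between :: "nat \<Rightarrow> nat set" where
  "primes_between m = {p. prime p \<and> 2*m < p \<and> p < 3*m}"

definition rho :: "nat \<Rightarrow> nat" where
  "rho m = card (primes_between m)"

definition pr :: "nat \<Rightarrow> nat \<Rightarrow> nat" where
  "pr m i = rev (sorted_list_of_set (primes_between m)) ! i"

definition alpha :: "nat \<Rightarrow> nat \<Rightarrow> nat" where
  "alpha m i = 3*m - pr m i"

definition kk :: "nat \<Rightarrow> nat" where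
  "kk m = (6*m - 1) * rho m"

definition mu :: "nat \<Rightarrow> nat \<Rightarrow> nat" where
  "mu m i = kk m div pr m i"

definition beta :: "nat \<Rightarrow> nat \<Rightarrow> nat" where
  "beta m i = kk m - pr m i * mu m i"

definition mult_in :: "nat \<Rightarrow> nat \<Rightarrow> nat \<Rightarrow> nat \<Rightarrow> bool" where
  "mult_in m lo hi j = (\<exists>i<rho m. \<exists>l. lo \<le> l \<and> l \<le> hi \<and> j = l * pr m i)"

definition abar :: "nat \<Rightarrow> nat \<Rightarrow> int" where
  "abar m j =
    (if even (rho m) then
       (if mult_in m 1 (3 * rho m div 2) j then 2
        else if mult_in m (3 * rho m div 2 + 1) (2 * rho m) j then -2
        else 0)
     else
       (if mult_in m 1 ((3 * rho m - 1) div 2) j then 2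
        else if mult_in m ((3 * rho m + 1) div 2) (2 * rho m - 2) j then -2
        else if mult_in m (2 * rho m - 1) (2 * rho m) j then -1
        else 0))"

definition theta_bar :: "nat \<Rightarrow> int" where
  "theta_bar m = 2 * int (rho m)"

definition ind :: "int \<Rightarrow> int" where
  "ind u = (if u \<ge> 0 then 1 else 0)"

function xrec :: "nat \<Rightarrow> (nat \<Rightarrow> int) \<Rightarrow> int \<Rightarrow> (nat \<Rightarrow> int) \<Rightarrow> nat \<Rightarrow> int" where
  "xrec k a th init t =
     (if t < k then init t
      else ind ((\<Sum>j\<in>{1..k}. a j * xrec k a th init (t - j)) - th))"
  by auto
termination
  by (relation "measure (\<lambda>(k, a, th, init, t). t)") auto

definition x_init :: "nat \<Rightarrow> nat \<Rightarrow> nat \<Rightarrow> int" where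
  "x_init m i t = (if \<exists>l. l < mu m i \<and> t = beta m i + l * pr m i then 1 else 0)"

text \<open>x^{alpha_i}(t)\<close>
definition xa :: "nat \<Rightarrow> nat \<Rightarrow> nat \<Rightarrow> int" where
  "xa m i t = xrec (kk m) (abar m) (theta_bar m) (x_init m i) t"

end

theory Submission
  imports Defs "HOL-Number_Theory.Cong"
begin

(* Write p = p_i, k = kk m and x = x^{alpha_i}.  At time k+t the threshold unit sees
   the terms abar_j * x(k+t-j), 1 <= j <= k.  A term with j < t vanishes by
   the induction hypothesis; a term with j > t reads an initial value, and
   the initial pattern is supported on the residue class of beta = k mod p,
   so it can only be nonzero when j = t (mod p).  A positive weight abar_j
   (at most 2) sits only at j = l * p_i' with l <= 2 rho.  Since 2 rho < p and
   distinct primes are coprime, each prime p_i' with i' <> i contributes at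
   most one such j in the class of t, and p_i itself none (p does not divide
   t).  Hence the input is at most 2 (rho - 1) < 2 rho = theta_bar, and the
   unit stays silent. *)

lemma finite_primes_between: "finite (primes_between m)"
  by (rule finite_subset[of _ "{..<3*m}"]) (auto simp: primes_between_def)

lemma pr_in_primes_between: "i < rho m \<Longrightarrow> pr m i \<in> primes_between m"
  unfolding pr_def rho_def
  by (metis finite_primes_between length_rev length_sorted_list_of_set nth_mem
        set_rev set_sorted_list_of_set)

lemma pr_inj: "i < rho m \<Longrightarrow> j < rho m \<Longrightarrow> pr m i = pr m j \<Longrightarrow> i = j"
  unfolding pr_def rho_def
  by (metis distinct_rev distinct_sorted_list_of_set length_rev
        length_sorted_list_of_set nth_eq_iff_index_eq)

lemma prime_pr: "i < rho m \<Longrightarrow> prime (pr m i)"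
  using pr_in_primes_between by (simp add: primes_between_def)

text \<open>The primes are large compared with their number: 2 rho(m) < p_i.  This is what
  makes the multiples l * p_i', 1 <= l <= 2 rho(m), pairwise incongruent mod p_i.\<close>

lemma two_rho_less_pr:
  assumes "i < rho m"
  shows "2 * rho m < pr m i"
proof -
  have "primes_between m \<subseteq> {2*m<..<3*m}" by (auto simp: primes_between_def)
  then have "rho m \<le> m - 1"
    unfolding rho_def using card_mono[of "{2*m<..<3*m}"] by simp
  moreover have "2 * m < pr m i"
    using pr_in_primes_between[OF assms] by (simp add: primes_between_def)
  ultimately show ?thesis by linarith
qed

lemma xrec_in_01: "range init \<subseteq> {0, 1} \<Longrightarrow> xrec k a th init t \<in> {0, 1}"
  by (subst xrec.simps) (auto simp: ind_def)

lemma xa_in_01: "xa m i s \<in> {0, 1}"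
  unfolding xa_def by (rule xrec_in_01) (auto simp: x_init_def)

lemma xa_initial: "s < kk m \<Longrightarrow> xa m i s = x_init m i s"
  unfolding xa_def by (subst xrec.simps) simp

lemma xa_step:
  "xa m i (kk m + t) =
     ind ((\<Sum>j\<in>{1..kk m}. abar m j * xa m i (kk m + t - j)) - theta_bar m)"
  unfolding xa_def by (subst xrec.simps) simp

lemma x_init_support:
  assumes "x_init m i s \<noteq> 0"
  shows "[s = kk m] (mod pr m i)"
proof -
  obtain l where "s = beta m i + l * pr m i"
    using assms by (auto simp: x_init_def split: if_splits)
  moreover have "beta m i = kk m mod pr m i"
    by (simp add: beta_def mu_def minus_mult_div_eq_mod)
  ultimately show ?thesis by (simp add: cong_def)
qed

lemma mult_in_mono: "mult_in m lo hi j \<Longrightarrow> hi \<le> hi' \<Longrightarrow> mult_in m lo hi' j"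
  unfolding mult_in_def by (metis order_trans)

lemma abar_le: "abar m j \<le> (if mult_in m 1 (2 * rho m) j then 2 else 0)"
  unfolding abar_def
  by (auto split: if_splits dest: mult_in_mono[where hi'="2 * rho m"])

lemma card_multiples_in_class_le_1:
  fixes p q t n :: nat
  assumes "coprime q p" and "n < p"
  shows "card {l \<in> {1..n}. [l * q = t] (mod p)} \<le> 1"
proof -
  have "l1 = l2" if "l1 \<in> {l \<in> {1..n}. [l * q = t] (mod p)}"
    and "l2 \<in> {l \<in> {1..n}. [l * q = t] (mod p)}" for l1 l2
  proof -
    have "[l1 * q = l2 * q] (mod p)"
      using that by (auto intro: cong_trans cong_sym)
    then have "[l1 = l2] (mod p)" using cong_mult_rcancel_nat[OF assms(1)] by blast
    then show ?thesis using that assms(2) cong_less_modulus_unique_nat by auto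
  qed
  then show ?thesis by (simp add: card_le_Suc0_iff_eq)
qed

definition resonant :: "nat \<Rightarrow> nat \<Rightarrow> nat \<Rightarrow> nat set" where
  "resonant m i t =
     {j \<in> {1..kk m}. [j = t] (mod pr m i) \<and> mult_in m 1 (2 * rho m) j}"

text \<open>Each prime p_i' with i' <> i contributes at most one resonant lag, and p_i
  none because p_i does not divide t.\<close>

lemma card_resonant_le:
  assumes i: "i < rho m" and t: "\<not> pr m i dvd t"
  shows "card (resonant m i t) \<le> rho m - 1"
proof -
  let ?p = "pr m i"
  define B where
    "B i' = (\<lambda>l. l * pr m i') ` {l \<in> {1..2 * rho m}. [l * pr m i' = t] (mod ?p)}" for i'
  let ?I = "{..<rho m} - {i}"
  have cover: "resonant m i t \<subseteq> (\<Union>i'\<in>?I. B i')"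
  proof
    fix j assume j: "j \<in> resonant m i t"
    then obtain i' l where i': "i' < rho m" and l: "1 \<le> l" "l \<le> 2 * rho m"
      and jl: "j = l * pr m i'" and jt: "[j = t] (mod ?p)"
      by (auto simp: resonant_def mult_in_def)
    have "i' \<noteq> i"
    proof
      assume "i' = i"
      then have "?p dvd j" using jl by simp
      then show False using t cong_dvd_iff[OF jt] by blast
    qed
    then show "j \<in> (\<Union>i'\<in>?I. B i')" using i' l jl jt by (auto simp: B_def)
  qed
  have card_B: "card (B i') \<le> 1" if "i' \<in> ?I" for i'
  proof -
    have "pr m i' \<noteq> ?p" using that i pr_inj by blast
    then have "coprime (pr m i') ?p"
      using that i by (intro primes_coprime prime_pr) auto
    then have "card {l \<in> {1..2 * rho m}. [l * pr m i' = t] (mod ?p)} \<le> 1"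
      using two_rho_less_pr[OF i] by (rule card_multiples_in_class_le_1)
    then show ?thesis
      unfolding B_def by (rule le_trans[OF card_image_le, rotated]) simp
  qed
  have "card (resonant m i t) \<le> card (\<Union>i'\<in>?I. B i')"
    using cover by (intro card_mono) (auto simp: B_def)
  also have "\<dots> \<le> (\<Sum>i'\<in>?I. card (B i'))" by (rule card_UN_le) simp
  also have "\<dots> \<le> (\<Sum>i'\<in>?I. 1)" using card_B by (rule sum_mono)
  also have "\<dots> = rho m - 1" using i by simp
  finally show ?thesis .
qed

text \<open>If x(k+s) = 0 for all 1 <= s < t, then every lag j that feeds a nonzero value
  into time k + t is congruent to t mod p_i: lags j < t read zeros, and lags j > t
  read initial values, which live in the class of k.\<close>

lemma nonzero_lag_cong:
  assumes silent: "\<And>s. 1 \<le> s \<Longrightarrow> s < t \<Longrightarrow> xa m i (kk m + s) = 0"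
    and j: "1 \<le> j" "j \<le> kk m" and nz: "xa m i (kk m + t - j) \<noteq> 0"
  shows "[j = t] (mod pr m i)"
proof -
  consider "j < t" | "j = t" | "t < j" by linarith
  then show ?thesis
  proof cases
    case 1
    have "xa m i (kk m + (t - j)) = 0" using silent[of "t - j"] 1 j by simp
    moreover have "kk m + t - j = kk m + (t - j)" using 1 by simp
    ultimately show ?thesis using nz by simp
  next
    case 2
    then show ?thesis by simp
  next
    case 3
    then have "kk m + t - j < kk m" using j by simp
    then have "x_init m i (kk m + t - j) \<noteq> 0" using nz by (simp add: xa_initial)
    then have "[kk m + t - j = kk m] (mod pr m i)" by (rule x_init_support)
    then have "[(kk m + t - j) + j = kk m + j] (mod pr m i)" by (rule cong_add) simp
    then have "[kk m + t = kk m + j] (mod pr m i)" using j by simp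
    then show ?thesis by (simp add: cong_add_lcancel_nat cong_sym)
  qed
qed

lemma input_le_resonant:
  assumes silent: "\<And>s. 1 \<le> s \<Longrightarrow> s < t \<Longrightarrow> xa m i (kk m + s) = 0"
  shows "(\<Sum>j\<in>{1..kk m}. abar m j * xa m i (kk m + t - j))
           \<le> 2 * int (card (resonant m i t))"
proof -
  have term_le: "abar m j * xa m i (kk m + t - j) \<le> (if j \<in> resonant m i t then 2 else 0)"
    if j: "j \<in> {1..kk m}" for j
  proof (cases "xa m i (kk m + t - j) = 0")
    case False
    then have "xa m i (kk m + t - j) = 1" using xa_in_01 by blast
    moreover have "[j = t] (mod pr m i)"
      using nonzero_lag_cong[OF silent _ _ False] j by auto
    ultimately show ?thesis using abar_le[of m j] j by (auto simp: resonant_def)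
  qed simp
  have "(\<Sum>j\<in>{1..kk m}. abar m j * xa m i (kk m + t - j))
          \<le> (\<Sum>j\<in>{1..kk m}. if j \<in> resonant m i t then 2 else 0)"
    using term_le by (rule sum_mono)
  also have "\<dots> = 2 * int (card (resonant m i t))"
  proof -
    have "{1..kk m} \<inter> resonant m i t = resonant m i t" by (auto simp: resonant_def)
    then show ?thesis by (simp add: sum.If_cases)
  qed
  finally show ?thesis .
qed

theorem lemma6:
  fixes m i t :: nat
  assumes "0 < m" and "rho m \<ge> 2" and "i < rho m" and "1 \<le> t" and "t \<le> pr m i - 1"
  shows "xa m i (kk m + t) = 0"
  using assms(4,5)
proof (induction t rule: less_induct)
  case (less t)
  have "0 < t" "t < pr m i" using less.prems prime_gt_0_nat[OF prime_pr[OF assms(3)]] by auto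
  then have "\<not> pr m i dvd t" by (auto dest: dvd_imp_le)
  then have "card (resonant m i t) \<le> rho m - 1" using card_resonant_le assms(3) by blast
  moreover have "(\<Sum>j\<in>{1..kk m}. abar m j * xa m i (kk m + t - j))
                   \<le> 2 * int (card (resonant m i t))"
    using less.IH less.prems by (intro input_le_resonant) auto
  ultimately have "(\<Sum>j\<in>{1..kk m}. abar m j * xa m i (kk m + t - j)) < theta_bar m"
    using assms(3) by (simp add: theta_bar_def)
  then show ?case by (simp add: xa_step ind_def)
qed

end
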